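(* There exists a deterministic algorithm that finds the sink of any $n$-dimensional realizable Matoušek-type USO using $O(\log^2 n)$ vertex evaluations in the worst case.
   Context: All vectors and matrices are over $GF(2)$; $\oplus$ denotes xor. The $n$-dimensional hypercube has vertex set $\{0,1\}^n$, with vertices adjacent iff they differ in exactly one coordinate. An orientation is given by an outmap $o:\{0,1\}^n\to\{0,1\}^n$, the edge $\{v,v\oplus e_i\}$ being directed away from $v$ iff $o(v)_i=1$ (with $o(v)_i\neq o(v\oplus e_i)_i$). A USO is an orientation in which every non-empty face has a unique sink. An $n$-dimensional Matoušek-type USO is an orientation $o(v)=M(v\oplus s)$ where $M=PAP^T$ for a permutation matrix $P$ and an invertible upper-triangular $A\in\{0,1\}^{n\times n}$, and $s\in\{0,1\}^n$ is its sink. Its dimension influence graph is the directed graph on $[n]$ with an edge $(i,j)$ iff $M_{j,i}=1$. A USO is realizable if it is produced by the (Stickney–Watson) reduction from some non-degenerate P-matrix Linear Complementarity Problem instance to USO sink-finding; for Matoušek-type USOs it is known that this holds iff the dimension influence graph is the reflexive transitive closure of a branching (a forest of rooted trees with all edges directed away from the roots). A sink-finding algorithm accesses the USO only via vertex evaluations: querying $v$ returns $o(v)$. *)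

theory Defs
  imports "Jordan_Normal_Form.Determinant" "Jordan_Normal_Form.DL_Submatrix"
begin

text \<open>Vertices of the n-cube are subsets of the index set {0..<n};
  xor of vertices is symmetric difference. An outmap is a function on vertices.\<close>

definition vxor :: "nat set \<Rightarrow> nat set \<Rightarrow> nat set" where
  "vxor u v = (u - v) \<union> (v - u)"

text \<open>GF(2) matrices as boolean functions (row, column); products over GF(2).\<close>

definition gf2_matvec :: "nat \<Rightarrow> (nat \<Rightarrow> nat \<Rightarrow> bool) \<Rightarrow> nat set \<Rightarrow> nat set" where
  "gf2_matvec n M v = {j. j < n \<and> odd (card {i. i < n \<and> M j i \<and> i \<in> v})}"

definition gf2_matmul :: "nat \<Rightarrow> (nat \<Rightarrow> nat \<Rightarrow> bool) \<Rightarrow> (nat \<Rightarrow> nat \<Rightarrow> bool) \<Rightarrow> nat \<Rightarrow> nat \<Rightarrow> bool" where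
  "gf2_matmul n A B i j = odd (card {k. k < n \<and> A i k \<and> B k j})"

definition gf2_invertible :: "nat \<Rightarrow> (nat \<Rightarrow> nat \<Rightarrow> bool) \<Rightarrow> bool" where
  "gf2_invertible n A = (\<exists>B. \<forall>i<n. \<forall>j<n.
      gf2_matmul n A B i j = (i = j) \<and> gf2_matmul n B A i j = (i = j))"

definition upper_triangular_gf2 :: "nat \<Rightarrow> (nat \<Rightarrow> nat \<Rightarrow> bool) \<Rightarrow> bool" where
  "upper_triangular_gf2 n A = (\<forall>i<n. \<forall>j<n. j < i \<longrightarrow> \<not> A i j)"

text \<open>Matousek-type USO with sink s: o(v) = M (v xor s) on the cube, where
  M = P A P^T, i.e. M j i = A (sigma j) (sigma i) for a permutation sigma of {0..<n}.\<close>

definition matousek_uso :: "nat \<Rightarrow> (nat set \<Rightarrow> nat set) \<Rightarrow> bool" where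
  "matousek_uso n out = (\<exists>\<sigma> A s. \<sigma> permutes {..<n} \<and> upper_triangular_gf2 n A \<and>
      gf2_invertible n A \<and> s \<subseteq> {..<n} \<and>
      (\<forall>v. v \<subseteq> {..<n} \<longrightarrow>
         out v = gf2_matvec n (\<lambda>j i. A (\<sigma> j) (\<sigma> i)) (vxor v s)))"

definition P_matrix :: "nat \<Rightarrow> real mat \<Rightarrow> bool" where
  "P_matrix n M = (M \<in> carrier_mat n n \<and>
      (\<forall>I. I \<subseteq> {..<n} \<longrightarrow> I \<noteq> {} \<longrightarrow> det (submatrix M I I) > 0))"

definition sw_basis :: "nat \<Rightarrow> real mat \<Rightarrow> nat set \<Rightarrow> real mat" where
  "sw_basis n M v = mat n n (\<lambda>(i,j). if j \<in> v then - (M $$ (i,j)) else (if i = j then 1 else 0))"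

definition sw_sol :: "nat \<Rightarrow> real mat \<Rightarrow> real vec \<Rightarrow> nat set \<Rightarrow> real vec" where
  "sw_sol n M q v = (THE x. x \<in> carrier_vec n \<and> sw_basis n M v *\<^sub>v x = q)"

definition nondegenerate_lcp :: "nat \<Rightarrow> real mat \<Rightarrow> real vec \<Rightarrow> bool" where
  "nondegenerate_lcp n M q = (\<forall>v. v \<subseteq> {..<n} \<longrightarrow> (\<forall>i<n. sw_sol n M q v $ i \<noteq> 0))"

definition sw_outmap :: "nat \<Rightarrow> real mat \<Rightarrow> real vec \<Rightarrow> nat set \<Rightarrow> nat set" where
  "sw_outmap n M q v = {i. i < n \<and> sw_sol n M q v $ i < 0}"

definition realizable :: "nat \<Rightarrow> (nat set \<Rightarrow> nat set) \<Rightarrow> bool" where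
  "realizable n out = (\<exists>M q. P_matrix n M \<and> q \<in> carrier_vec n \<and> nondegenerate_lcp n M q \<and>
      (\<forall>v. v \<subseteq> {..<n} \<longrightarrow> out v = sw_outmap n M q v))"

text \<open>Deterministic query algorithms as (possibly infinite-branching) decision trees:
  either output a vertex, or query a vertex and continue depending on the answer.\<close>

datatype qalg = Answer "nat set" | Query "nat set" "nat set \<Rightarrow> qalg"

primrec run_result :: "qalg \<Rightarrow> (nat set \<Rightarrow> nat set) \<Rightarrow> nat set" where
  "run_result (Answer v) out = v"
| "run_result (Query v k) out = run_result (k (out v)) out"

primrec run_queries :: "qalg \<Rightarrow> (nat set \<Rightarrow> nat set) \<Rightarrow> nat" where
  "run_queries (Answer v) out = 0"
| "run_queries (Query v k) out = Suc (run_queries (k (out v)) out)"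

definition is_sink :: "nat \<Rightarrow> (nat set \<Rightarrow> nat set) \<Rightarrow> nat set \<Rightarrow> bool" where
  "is_sink n out v = (v \<subseteq> {..<n} \<and> out v = {})"

end

theory Submission
  imports Defs "HOL-Library.Log_Nat"
begin

text \<open>Write \<open>R i j\<close> for \<open>M j i = 1\<close>. Comparing the Stickney-Watson solutions of a P-matrix LCP
  for the bases \<open>{}\<close>, \<open>{a}\<close> and \<open>{i, j}\<close> shows that realizability forces \<open>R\<close> to be
  reflexive, antisymmetric and transitive, with the \<open>R\<close>-predecessors of every vertex forming a
  chain: \<open>R\<close> is the ancestor relation of a forest. Then \<open>o(v) \<oplus> o({})\<close> is the set of
  vertices with an odd number of ancestors in \<open>v\<close>, so every query returns one parity along the
  root path of each vertex simultaneously. With \<open>L = \<lfloor>log\<^sub>2 n\<rfloor> + 1\<close> queries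
  one learns all depths bit by bit; then pointer jumping over the powers of two, from \<open>2 ^ L\<close>
  down to \<open>1\<close>, determines all parents, each bit of the index of the \<open>2 ^ m\<close>-th
  ancestor being a telescoping parity along the root path, at a cost of \<open>2 L\<close> queries per
  level. Finally \<open>j \<in> s\<close> iff \<open>o({})\<close> differs at \<open>j\<close> and at its parent, since
  \<open>o({}) = M s\<close>. This makes \<open>1 + L + 2 L\<^sup>2\<close> queries.\<close>

lemma sw_basis_mult_vec_nth:
  assumes "x \<in> carrier_vec n" "r < n" "v \<subseteq> {..<n}"
  shows "(sw_basis n M v *\<^sub>v x) $ r = (if r \<in> v then 0 else x $ r) - (\<Sum>j\<in>v. M $$ (r,j) * x $ j)"
proof -
  have "(sw_basis n M v *\<^sub>v x) $ r
      = (\<Sum>j<n. (if j \<in> v then - (M $$ (r,j)) else (if r = j then 1 else 0)) * x $ j)"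
    using assms by (simp add: sw_basis_def mult_mat_vec_def scalar_prod_def lessThan_atLeast0)
  also have "\<dots> = (\<Sum>j<n. if j = r \<and> j \<notin> v then x $ j else 0) - (\<Sum>j<n. if j \<in> v then M $$ (r,j) * x $ j else 0)"
    by (subst sum_subtractf[symmetric]) (rule sum.cong; auto)
  also have "(\<Sum>j<n. if j = r \<and> j \<notin> v then x $ j else 0) =
      (\<Sum>j<n. if j = r then (if r \<in> v then 0 else x $ r) else 0)"
    by (rule sum.cong) auto
  also have "\<dots> = (if r \<in> v then 0 else x $ r)"
    using assms(2) by simp
  also have "(\<Sum>j<n. if j \<in> v then M $$ (r,j) * x $ j else 0) = (\<Sum>j\<in>v. M $$ (r,j) * x $ j)"
    using assms(3) by (simp add: sum.If_cases Int_absorb1)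
  finally show ?thesis .
qed

lemma sw_basis_mult_vec_eq_iff:
  assumes "v \<subseteq> {..<n}" "q \<in> carrier_vec n" "x \<in> carrier_vec n"
  shows "sw_basis n M v *\<^sub>v x = q \<longleftrightarrow>
    (\<forall>r<n. (if r \<in> v then 0 else x $ r) - (\<Sum>j\<in>v. M $$ (r,j) * x $ j) = q $ r)"
proof -
  have "dim_vec (sw_basis n M v *\<^sub>v x) = n" "dim_vec q = n"
    using assms(2) by (simp_all add: sw_basis_def)
  then show ?thesis
    unfolding vec_eq_iff using sw_basis_mult_vec_nth[OF assms(3) _ assms(1)]
    by (simp del: index_mult_mat_vec)
qed

lemma sw_solI:
  assumes "v \<subseteq> {..<n}" "q \<in> carrier_vec n" "x \<in> carrier_vec n"
    and solves: "\<And>r. r < n \<Longrightarrow> (if r \<in> v then 0 else x $ r) - (\<Sum>j\<in>v. M $$ (r,j) * x $ j) = q $ r"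
    and unique: "\<And>y. y \<in> carrier_vec n \<Longrightarrow>
      (\<And>r. r < n \<Longrightarrow> (if r \<in> v then 0 else y $ r) - (\<Sum>j\<in>v. M $$ (r,j) * y $ j) = q $ r) \<Longrightarrow> y = x"
  shows "sw_sol n M q v = x"
  unfolding sw_sol_def
proof (rule the_equality)
  show "x \<in> carrier_vec n \<and> sw_basis n M v *\<^sub>v x = q"
    using solves assms(3) by (simp add: sw_basis_mult_vec_eq_iff[OF assms(1-3)])
  fix y
  assume "y \<in> carrier_vec n \<and> sw_basis n M v *\<^sub>v y = q"
  then show "y = x"
    using unique sw_basis_mult_vec_eq_iff[OF assms(1,2), of y] by blast
qed

lemma sw_sol_empty:
  assumes "q \<in> carrier_vec n"
  shows "sw_sol n M q {} = q"
proof (rule sw_solI)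
  fix y :: "real vec"
  assume "y \<in> carrier_vec n"
    and "\<And>r. r < n \<Longrightarrow> (if r \<in> {} then 0 else y $ r) - (\<Sum>j\<in>{}. M $$ (r,j) * y $ j) = q $ r"
  then show "y = q"
    using assms by (intro eq_vecI) auto
qed (use assms in auto)

lemma P_matrix_diag_pos:
  assumes "P_matrix n M" "a < n"
  shows "M $$ (a,a) > 0"
proof -
  have M: "M \<in> carrier_mat n n" using assms by (simp add: P_matrix_def)
  have "{r. r < n \<and> r \<in> {a}} = {a}" using assms by blast
  then have "card {r. r < dim_row M \<and> r \<in> {a}} = 1" "card {r. r < dim_col M \<and> r \<in> {a}} = 1"
    using M by auto
  then have sub: "submatrix M {a} {a} \<in> carrier_mat 1 1"
    unfolding carrier_mat_def mem_Collect_eq dim_submatrix by (intro conjI)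
  have c0: "{x\<in>{a}. x < a} = {}" by auto
  have "submatrix M {a} {a} $$ (card {x\<in>{a}. x < a}, card {x\<in>{a}. x < a}) = M $$ (a,a)"
    by (rule submatrix_index_card) (use M assms in auto)
  then have "submatrix M {a} {a} $$ (0, 0) = M $$ (a,a)"
    by (simp only: c0 card.empty)
  moreover have "det (submatrix M {a} {a}) > 0" using assms by (auto simp: P_matrix_def)
  ultimately show ?thesis using det_single[OF sub] by simp
qed

lemma det_2x2:
  assumes "A \<in> carrier_mat 2 2"
  shows "det A = A $$ (0,0) * A $$ (1,1) - A $$ (0,1) * A $$ (1,0)"
proof -
  have "det A = (\<Sum>j<2. A $$ (0,j) * cofactor A 0 j)"
    by (rule laplace_expansion_row[OF assms]) auto
  also have "\<dots> = A $$ (0,0) * cofactor A 0 0 + A $$ (0,1) * cofactor A 0 1"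
    by (simp add: numeral_2_eq_2)
  also have "cofactor A 0 0 = A $$ (1,1)"
    unfolding cofactor_def using assms by (subst det_single) (auto simp: mat_delete_def)
  also have "cofactor A 0 1 = - A $$ (1,0)"
    unfolding cofactor_def using assms by (subst det_single) (auto simp: mat_delete_def)
  finally show ?thesis by simp
qed

lemma P_matrix_minor2_pos_less:
  assumes P: "P_matrix n M" and ij: "i < j" "j < n"
  shows "M $$ (i,i) * M $$ (j,j) - M $$ (i,j) * M $$ (j,i) > 0"
proof -
  have M: "M \<in> carrier_mat n n" using P by (simp add: P_matrix_def)
  have "{r. r < n \<and> r \<in> {i,j}} = {i,j}" using ij by auto
  then have "card {r. r < dim_row M \<and> r \<in> {i,j}} = 2" "card {r. r < dim_col M \<and> r \<in> {i,j}} = 2"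
    using M ij by auto
  then have sub: "submatrix M {i,j} {i,j} \<in> carrier_mat 2 2"
    unfolding carrier_mat_def mem_Collect_eq dim_submatrix by (intro conjI)
  have entry: "submatrix M {i,j} {i,j} $$ (card {x\<in>{i,j}. x < a}, card {x\<in>{i,j}. x < b}) = M $$ (a,b)"
    if "a \<in> {i,j}" "b \<in> {i,j}" for a b
    by (rule submatrix_index_card) (use M that ij in auto)
  have i: "{x\<in>{i,j}. x < i} = {}" and j: "{x\<in>{i,j}. x < j} = {i}"
    using ij by auto
  have "det (submatrix M {i,j} {i,j}) = M $$ (i,i) * M $$ (j,j) - M $$ (i,j) * M $$ (j,i)"
    using entry[of i i] entry[of i j] entry[of j i] entry[of j j]
    unfolding det_2x2[OF sub] i j by simp
  moreover have "det (submatrix M {i,j} {i,j}) > 0"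
    using P ij by (auto simp: P_matrix_def)
  ultimately show ?thesis by simp
qed

lemma P_matrix_minor2_pos:
  assumes "P_matrix n M" "i < n" "j < n" "i \<noteq> j"
  shows "M $$ (i,i) * M $$ (j,j) - M $$ (i,j) * M $$ (j,i) > 0"
proof (cases "i < j")
  case True
  then show ?thesis using P_matrix_minor2_pos_less assms by blast
next
  case False
  then have "j < i" using assms by simp
  from P_matrix_minor2_pos_less[OF assms(1) this assms(2)] show ?thesis
    by (simp add: algebra_simps)
qed

lemma sw_sol_singleton_nth:
  assumes P: "P_matrix n M" and q: "q \<in> carrier_vec n" and a: "a < n" and r: "r < n"
  shows "sw_sol n M q {a} $ r =
    (if r = a then - (q $ a) / M $$ (a,a) else q $ r - M $$ (r,a) * q $ a / M $$ (a,a))"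
proof -
  have m: "M $$ (a,a) > 0" using P_matrix_diag_pos[OF P a] .
  define x where "x = vec n (\<lambda>r. if r = a then - (q $ a) / M $$ (a,a) else q $ r - M $$ (r,a) * q $ a / M $$ (a,a))"
  have "sw_sol n M q {a} = x"
  proof (rule sw_solI)
    show "{a} \<subseteq> {..<n}" "q \<in> carrier_vec n" "x \<in> carrier_vec n"
      using a q by (auto simp: x_def)
    show "(if r \<in> {a} then 0 else x $ r) - (\<Sum>j\<in>{a}. M $$ (r,j) * x $ j) = q $ r" if "r < n" for r
      using that a m by (auto simp: x_def field_simps)
    fix y
    assume y: "y \<in> carrier_vec n"
      and rows: "\<And>r. r < n \<Longrightarrow> (if r \<in> {a} then 0 else y $ r) - (\<Sum>j\<in>{a}. M $$ (r,j) * y $ j) = q $ r"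
    have ya: "y $ a = - (q $ a) / M $$ (a,a)" using rows[OF a] m by (simp add: field_simps)
    show "y = x"
    proof (rule eq_vecI)
      show "y $ r = x $ r" if "r < dim_vec x" for r
        using that rows[of r] ya m by (cases "r = a") (auto simp: x_def field_simps)
    qed (use y in \<open>simp add: x_def\<close>)
  qed
  then show ?thesis using r by (simp add: x_def)
qed

lemma sw_sol_pair_nth:
  assumes P: "P_matrix n M" and q: "q \<in> carrier_vec n"
    and ijk: "i < n" "j < n" "k < n" "i \<noteq> j" "k \<noteq> i" "k \<noteq> j"
  defines "D \<equiv> M $$ (i,i) * M $$ (j,j) - M $$ (i,j) * M $$ (j,i)"
  shows "sw_sol n M q {i,j} $ k =
    q $ k - M $$ (k,i) * (M $$ (j,j) * q $ i - M $$ (i,j) * q $ j) / D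
          - M $$ (k,j) * (M $$ (i,i) * q $ j - M $$ (j,i) * q $ i) / D"
proof -
  have D: "D > 0" using P_matrix_minor2_pos[OF P ijk(1,2,4)] by (simp add: D_def)
  define Xi where "Xi = - (M $$ (j,j) * q $ i - M $$ (i,j) * q $ j) / D"
  define Xj where "Xj = - (M $$ (i,i) * q $ j - M $$ (j,i) * q $ i) / D"
  define x where "x = vec n (\<lambda>r. if r = i then Xi else if r = j then Xj
                                  else q $ r + M $$ (r,i) * Xi + M $$ (r,j) * Xj)"
  have sum2: "\<And>f. (\<Sum>r\<in>{i,j}. f r) = f i + f j" using ijk by simp
  have XiD: "Xi * D = - (M $$ (j,j) * q $ i - M $$ (i,j) * q $ j)"
    and XjD: "Xj * D = - (M $$ (i,i) * q $ j - M $$ (j,i) * q $ i)"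
    using D by (simp_all add: Xi_def Xj_def)
  have "D * (- (M $$ (i,i) * Xi) - M $$ (i,j) * Xj) = - M $$ (i,i) * (Xi * D) - M $$ (i,j) * (Xj * D)"
    by (simp add: algebra_simps)
  also have "\<dots> = D * q $ i"
    unfolding XiD XjD by (simp add: D_def algebra_simps)
  finally have row_i: "- (M $$ (i,i) * Xi) - M $$ (i,j) * Xj = q $ i"
    using D by simp
  have "D * (- (M $$ (j,i) * Xi) - M $$ (j,j) * Xj) = - M $$ (j,i) * (Xi * D) - M $$ (j,j) * (Xj * D)"
    by (simp add: algebra_simps)
  also have "\<dots> = D * q $ j"
    unfolding XiD XjD by (simp add: D_def algebra_simps)
  finally have row_j: "- (M $$ (j,i) * Xi) - M $$ (j,j) * Xj = q $ j"
    using D by simp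
  have "sw_sol n M q {i,j} = x"
  proof (rule sw_solI)
    show "{i,j} \<subseteq> {..<n}" "q \<in> carrier_vec n" "x \<in> carrier_vec n"
      using ijk q by (auto simp: x_def)
    show "(if r \<in> {i,j} then 0 else x $ r) - (\<Sum>c\<in>{i,j}. M $$ (r,c) * x $ c) = q $ r" if "r < n" for r
      using that ijk row_i row_j by (auto simp: x_def sum2)
    fix y
    assume y: "y \<in> carrier_vec n" and rows: "\<And>r. r < n \<Longrightarrow>
      (if r \<in> {i,j} then 0 else y $ r) - (\<Sum>c\<in>{i,j}. M $$ (r,c) * y $ c) = q $ r"
    have ri: "- (M $$ (i,i) * y $ i) - M $$ (i,j) * y $ j = q $ i"
      and rj: "- (M $$ (j,i) * y $ i) - M $$ (j,j) * y $ j = q $ j"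
      using rows[OF ijk(1)] rows[OF ijk(2)] by (simp_all add: sum2)
    have "D * y $ i = - (M $$ (j,j) * q $ i - M $$ (i,j) * q $ j)"
      "D * y $ j = - (M $$ (i,i) * q $ j - M $$ (j,i) * q $ i)"
      unfolding D_def ri[symmetric] rj[symmetric] by (simp_all add: algebra_simps)
    then have yi: "y $ i = Xi" and yj: "y $ j = Xj"
      unfolding Xi_def Xj_def using D by (simp_all add: field_simps)
    show "y = x"
    proof (rule eq_vecI)
      show "y $ r = x $ r" if "r < dim_vec x" for r
        using that rows[of r] yi yj by (auto simp: x_def sum2 algebra_simps)
    qed (use y in \<open>simp add: x_def\<close>)
  qed
  then show ?thesis
    using ijk D by (simp add: x_def Xi_def Xj_def field_simps)
qed

text \<open>Normalising by \<open>q\<close>, the one- and two-column solutions become expressions in the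
  ratios below; the sign conditions of the outmap then turn into inequalities between them.\<close>

definition sw_ratio :: "real mat \<Rightarrow> real vec \<Rightarrow> nat \<Rightarrow> nat \<Rightarrow> real" where
  "sw_ratio M q r a = M $$ (r,a) * q $ a / (q $ r * M $$ (a,a))"

lemma sw_sol_singleton_ratio:
  assumes "P_matrix n M" "q \<in> carrier_vec n" "a < n" "r < n" "r \<noteq> a" "q $ r \<noteq> 0"
  shows "sw_sol n M q {a} $ r / q $ r = 1 - sw_ratio M q r a"
  using assms P_matrix_diag_pos[OF assms(1,3)]
  by (simp add: sw_sol_singleton_nth sw_ratio_def field_simps)

lemma sw_ratio_mult_less_1:
  assumes "P_matrix n M" "i < n" "j < n" "i \<noteq> j" "q $ i \<noteq> 0" "q $ j \<noteq> 0"
  shows "sw_ratio M q i j * sw_ratio M q j i < 1"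
proof -
  have "M $$ (i,i) > 0" "M $$ (j,j) > 0"
    using P_matrix_diag_pos assms by blast+
  moreover have "M $$ (i,j) * M $$ (j,i) < M $$ (i,i) * M $$ (j,j)"
    using P_matrix_minor2_pos[OF assms(1-4)] by simp
  ultimately show ?thesis
    using assms(5,6) by (simp add: sw_ratio_def field_simps)
qed

lemma sw_sol_pair_ratio:
  assumes P: "P_matrix n M" and q: "q \<in> carrier_vec n"
    and ijk: "i < n" "j < n" "k < n" "i \<noteq> j" "k \<noteq> i" "k \<noteq> j"
    and nz: "q $ i \<noteq> 0" "q $ j \<noteq> 0" "q $ k \<noteq> 0"
  defines "\<rho> \<equiv> sw_ratio M q"
  shows "sw_sol n M q {i,j} $ k / q $ k =
    1 - (\<rho> k i * (1 - \<rho> i j) + \<rho> k j * (1 - \<rho> j i)) / (1 - \<rho> i j * \<rho> j i)"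
proof -
  define D where "D = M $$ (i,i) * M $$ (j,j) - M $$ (i,j) * M $$ (j,i)"
  define A where "A = M $$ (j,j) * q $ i - M $$ (i,j) * q $ j"
  define B where "B = M $$ (i,i) * q $ j - M $$ (j,i) * q $ i"
  have pos: "M $$ (i,i) > 0" "M $$ (j,j) > 0" "D > 0"
    using P_matrix_diag_pos[OF P] P_matrix_minor2_pos[OF P ijk(1,2,4)] ijk by (auto simp: D_def)
  have den: "1 - \<rho> i j * \<rho> j i = D / (M $$ (i,i) * M $$ (j,j))"
    using pos nz by (simp add: \<rho>_def sw_ratio_def D_def field_simps)
  have num: "\<rho> k i * (1 - \<rho> i j) + \<rho> k j * (1 - \<rho> j i) =
      (M $$ (k,i) * A + M $$ (k,j) * B) / (q $ k * M $$ (i,i) * M $$ (j,j))"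
    using pos nz by (simp add: \<rho>_def sw_ratio_def A_def B_def field_simps)
  have sol: "sw_sol n M q {i,j} $ k = q $ k - M $$ (k,i) * A / D - M $$ (k,j) * B / D"
    using sw_sol_pair_nth[OF P q ijk] by (simp add: A_def B_def D_def)
  have "sw_sol n M q {i,j} $ k / q $ k = 1 - (M $$ (k,i) * A + M $$ (k,j) * B) / (q $ k * D)"
    unfolding sol using nz pos by (simp add: field_simps)
  also have "\<dots> = 1 - (M $$ (k,i) * A + M $$ (k,j) * B) / (q $ k * M $$ (i,i) * M $$ (j,j))
                      / (D / (M $$ (i,i) * M $$ (j,j)))"
    using nz pos by (simp add: field_simps)
  finally show ?thesis unfolding num den .
qed

lemma pair_ratio_pos:
  fixes a b c e :: real
  assumes "a * b < 1" "b > 1" "e > 1" "c < 1"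
  shows "1 - (c * (1 - a) + e * (1 - b)) / (1 - a * b) > 0"
proof -
  have "a < 1"
  proof (rule ccontr)
    assume "\<not> a < 1"
    then have "1 * 1 < a * b" using assms(2) by (intro mult_le_less_imp_less) auto
    with assms(1) show False by simp
  qed
  then have "c * (1 - a) < 1 - a" and "e * (1 - b) < 1 - b" and "(1 - a) * (1 - b) \<le> 0"
    using assms by (simp_all add: mult_less_cancel_right mult_nonneg_nonpos)
  then have "c * (1 - a) + e * (1 - b) < 1 - a * b" by (simp add: algebra_simps)
  then show ?thesis using assms(1) by simp
qed

lemma pair_ratio_neg:
  fixes a b c e :: real
  assumes "a * b < 1" "a < 1" "b < 1" "c > 1" "e > 1"
  shows "1 - (c * (1 - a) + e * (1 - b)) / (1 - a * b) < 0"
proof -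
  have "c * (1 - a) > 1 - a" and "e * (1 - b) > 1 - b" and "(1 - a) * (1 - b) > 0"
    using assms by (simp_all add: mult_less_cancel_right)
  then have "c * (1 - a) + e * (1 - b) > 1 - a * b" by (simp add: algebra_simps)
  then show ?thesis using assms(1) by simp
qed

locale linear_sw_outmap =
  fixes n :: nat and M :: "real mat" and q :: "real vec" and R :: "nat \<Rightarrow> nat \<Rightarrow> bool"
  assumes P: "P_matrix n M" and q: "q \<in> carrier_vec n" and nondeg: "nondegenerate_lcp n M q"
    and sign_flip: "\<And>v r. v \<subseteq> {..<n} \<Longrightarrow> r < n \<Longrightarrow>
      (sw_sol n M q v $ r < 0) \<longleftrightarrow> (odd (card ({i. i < n \<and> R i r} \<inter> v)) \<noteq> (q $ r < 0))"
begin

lemma q_nonzero: "r < n \<Longrightarrow> q $ r \<noteq> 0"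
  using nondeg sw_sol_empty[OF q, of M] unfolding nondegenerate_lcp_def by (metis empty_subsetI)

lemma sol_ratio_neg_iff:
  assumes "v \<subseteq> {..<n}" "r < n"
  shows "sw_sol n M q v $ r / q $ r < 0 \<longleftrightarrow> odd (card ({i. i < n \<and> R i r} \<inter> v))"
proof -
  have "sw_sol n M q v $ r \<noteq> 0"
    using nondeg assms unfolding nondegenerate_lcp_def by blast
  then show ?thesis
    using sign_flip[OF assms] q_nonzero[OF assms(2)] by (auto simp: divide_less_0_iff)
qed

lemma R_iff_ratio_gt_1:
  assumes "a < n" "r < n" "r \<noteq> a"
  shows "R a r \<longleftrightarrow> 1 < sw_ratio M q r a"
proof -
  have "R a r \<longleftrightarrow> odd (card ({i. i < n \<and> R i r} \<inter> {a}))"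
    using assms by (simp add: Int_insert_right)
  also have "\<dots> \<longleftrightarrow> sw_sol n M q {a} $ r / q $ r < 0"
    using sol_ratio_neg_iff[of "{a}" r] assms by simp
  also have "\<dots> \<longleftrightarrow> 1 < sw_ratio M q r a"
    using sw_sol_singleton_ratio[OF P q assms q_nonzero[OF assms(2)]] by simp
  finally show ?thesis .
qed

lemma not_R_iff_ratio_lt_1:
  assumes "a < n" "r < n" "r \<noteq> a"
  shows "\<not> R a r \<longleftrightarrow> sw_ratio M q r a < 1"
proof -
  have "sw_sol n M q {a} $ r \<noteq> 0"
    using nondeg assms unfolding nondegenerate_lcp_def by auto
  then have "sw_ratio M q r a \<noteq> 1"
    using sw_sol_singleton_ratio[OF P q assms q_nonzero[OF assms(2)]] q_nonzero[OF assms(2)] by auto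
  then show ?thesis
    using R_iff_ratio_gt_1[OF assms] by auto
qed

lemma pair_ratio_neg_iff:
  assumes ijk: "i < n" "j < n" "k < n" "i \<noteq> j" "k \<noteq> i" "k \<noteq> j"
  defines "\<rho> \<equiv> sw_ratio M q"
  shows "1 - (\<rho> k i * (1 - \<rho> i j) + \<rho> k j * (1 - \<rho> j i)) / (1 - \<rho> i j * \<rho> j i) < 0
    \<longleftrightarrow> R i k \<noteq> R j k"
proof -
  have "R i k \<noteq> R j k \<longleftrightarrow> odd (card ({c. c < n \<and> R c k} \<inter> {i,j}))"
    using ijk by (auto simp: Int_insert_right)
  also have "\<dots> \<longleftrightarrow> sw_sol n M q {i,j} $ k / q $ k < 0"
    using sol_ratio_neg_iff[of "{i,j}" k] ijk by simp
  finally show ?thesis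
    unfolding \<rho>_def using sw_sol_pair_ratio[OF P q ijk q_nonzero[OF ijk(1)] q_nonzero[OF ijk(2)]
      q_nonzero[OF ijk(3)]] by simp
qed

lemma R_refl: "a < n \<Longrightarrow> R a a"
proof -
  assume a: "a < n"
  have "sw_sol n M q {a} $ a / q $ a = - 1 / M $$ (a,a)"
    using a q_nonzero[OF a] by (simp add: sw_sol_singleton_nth[OF P q a a])
  also have "\<dots> < 0" using P_matrix_diag_pos[OF P a] by simp
  finally show "R a a"
    using sol_ratio_neg_iff[of "{a}" a] a by (simp add: Int_insert_right split: if_splits)
qed

lemma R_antisym:
  assumes "a < n" "b < n" "R a b" "R b a"
  shows "a = b"
proof (rule ccontr)
  assume "a \<noteq> b"
  then have "1 < sw_ratio M q b a" "1 < sw_ratio M q a b"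
    using R_iff_ratio_gt_1 assms by auto
  then have "1 * 1 < sw_ratio M q a b * sw_ratio M q b a"
    by (intro mult_strict_mono) auto
  moreover have "sw_ratio M q a b * sw_ratio M q b a < 1"
    using sw_ratio_mult_less_1[OF P] assms \<open>a \<noteq> b\<close> q_nonzero by blast
  ultimately show False by simp
qed

lemma R_trans:
  assumes ijk: "i < n" "j < n" "k < n" and "R i j" "R j k"
  shows "R i k"
proof (rule ccontr)
  assume nik: "\<not> R i k"
  then have d: "i \<noteq> j" "k \<noteq> i" "k \<noteq> j"
    using assms R_antisym by auto
  let ?\<rho> = "sw_ratio M q"
  have "?\<rho> i j * ?\<rho> j i < 1" "?\<rho> j i > 1" "?\<rho> k j > 1" "?\<rho> k i < 1"
    using sw_ratio_mult_less_1[OF P ijk(1,2) d(1)] q_nonzero ijk d assms(4,5) nik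
      R_iff_ratio_gt_1 not_R_iff_ratio_lt_1 by auto
  from pair_ratio_pos[OF this] pair_ratio_neg_iff[OF ijk d] nik \<open>R j k\<close> show False
    by simp
qed

lemma R_chain:
  assumes ijk: "i < n" "j < n" "k < n" and "R i k" "R j k"
  shows "R i j \<or> R j i"
proof (rule ccontr)
  assume nij: "\<not> (R i j \<or> R j i)"
  then have d: "i \<noteq> j" "k \<noteq> i" "k \<noteq> j"
    using assms R_refl by auto
  let ?\<rho> = "sw_ratio M q"
  have "?\<rho> i j * ?\<rho> j i < 1" "?\<rho> i j < 1" "?\<rho> j i < 1" "?\<rho> k i > 1" "?\<rho> k j > 1"
    using sw_ratio_mult_less_1[OF P ijk(1,2) d(1)] q_nonzero ijk d assms(4,5) nij
      R_iff_ratio_gt_1 not_R_iff_ratio_lt_1 by auto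
  from pair_ratio_neg[OF this] pair_ratio_neg_iff[OF ijk d] assms(4,5) show False
    by simp
qed

end

lemma vxor_iff: "x \<in> vxor A B \<longleftrightarrow> (x \<in> A) \<noteq> (x \<in> B)"
  unfolding vxor_def by auto

lemma odd_card_Int_vxor:
  assumes "finite A"
  shows "odd (card (A \<inter> vxor v w)) \<longleftrightarrow> odd (card (A \<inter> v)) \<noteq> odd (card (A \<inter> w))"
proof -
  let ?X = "A \<inter> v - w" and ?Y = "A \<inter> w - v" and ?Z = "A \<inter> v \<inter> w"
  have fin: "finite ?X" "finite ?Y" "finite ?Z" using assms by auto
  have "A \<inter> vxor v w = ?X \<union> ?Y" "A \<inter> v = ?X \<union> ?Z" "A \<inter> w = ?Y \<union> ?Z"
    by (auto simp: vxor_def)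
  moreover have "card (?X \<union> ?Y) = card ?X + card ?Y" "card (?X \<union> ?Z) = card ?X + card ?Z"
    "card (?Y \<union> ?Z) = card ?Y + card ?Z"
    by (rule card_Un_disjoint; use fin in auto)+
  ultimately show ?thesis by presburger
qed

locale forest_closure =
  fixes n :: nat and R :: "nat \<Rightarrow> nat \<Rightarrow> bool"
  assumes reflexive: "a < n \<Longrightarrow> R a a"
    and antisymmetric: "a < n \<Longrightarrow> b < n \<Longrightarrow> R a b \<Longrightarrow> R b a \<Longrightarrow> a = b"
    and transitive: "i < n \<Longrightarrow> j < n \<Longrightarrow> k < n \<Longrightarrow> R i j \<Longrightarrow> R j k \<Longrightarrow> R i k"
    and ancestors_chain: "i < n \<Longrightarrow> j < n \<Longrightarrow> k < n \<Longrightarrow> R i k \<Longrightarrow> R j k \<Longrightarrow> R i j \<or> R j i"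
begin

definition ancestors :: "nat \<Rightarrow> nat set" where
  "ancestors j = {i. i < n \<and> R i j}"

definition depth :: "nat \<Rightarrow> nat" where
  "depth j = card (ancestors j) - 1"

definition ancestor :: "nat \<Rightarrow> nat \<Rightarrow> nat" where
  "ancestor j k = (THE i. i \<in> ancestors j \<and> depth i = k)"

definition odd_ancestors :: "nat set \<Rightarrow> nat set" where
  "odd_ancestors w = {j. j < n \<and> odd (card (ancestors j \<inter> w))}"

lemma finite_ancestors: "finite (ancestors j)"
  unfolding ancestors_def by auto

lemma self_in_ancestors: "j < n \<Longrightarrow> j \<in> ancestors j"
  unfolding ancestors_def using reflexive by auto

lemma ancestors_less: "i \<in> ancestors j \<Longrightarrow> i < n"
  unfolding ancestors_def by auto

lemma ancestors_mono: "i \<in> ancestors j \<Longrightarrow> j < n \<Longrightarrow> ancestors i \<subseteq> ancestors j"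
  unfolding ancestors_def using transitive by blast

lemma card_ancestors: "j < n \<Longrightarrow> card (ancestors j) = Suc (depth j)"
  using self_in_ancestors[of j] finite_ancestors[of j] unfolding depth_def
  by (cases "card (ancestors j)") auto

lemma depth_less:
  assumes "i \<in> ancestors j" "j < n" "i \<noteq> j"
  shows "depth i < depth j"
proof -
  have "j \<notin> ancestors i"
    using assms antisymmetric unfolding ancestors_def by blast
  then have "ancestors i \<subset> ancestors j"
    using ancestors_mono[OF assms(1,2)] self_in_ancestors[OF assms(2)] by blast
  then have "card (ancestors i) < card (ancestors j)"
    by (rule psubset_card_mono[OF finite_ancestors])
  then show ?thesis
    using card_ancestors[OF assms(2)] card_ancestors[OF ancestors_less[OF assms(1)]] by simp
qed

lemma depth_le: "i \<in> ancestors j \<Longrightarrow> j < n \<Longrightarrow> depth i \<le> depth j"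
  using depth_less[of i j] by (cases "i = j") auto

lemma depth_less_n: "j < n \<Longrightarrow> depth j < n"
proof -
  assume j: "j < n"
  have "card (ancestors j) \<le> card {..<n}"
    by (rule card_mono) (auto simp: ancestors_def)
  then show ?thesis using card_ancestors[OF j] by simp
qed

lemma ancestors_in_ancestors:
  assumes "i \<in> ancestors j" "i' \<in> ancestors j" "j < n"
  shows "i \<in> ancestors i' \<or> i' \<in> ancestors i"
  using assms ancestors_chain unfolding ancestors_def by blast

lemma inj_on_depth: "j < n \<Longrightarrow> inj_on depth (ancestors j)"
proof (rule inj_onI)
  fix i i'
  assume "j < n" "i \<in> ancestors j" "i' \<in> ancestors j" "depth i = depth i'"
  then show "i = i'"
    using ancestors_in_ancestors depth_less[of i i'] depth_less[of i' i] ancestors_less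
    by (cases "i = i'") auto
qed

lemma depth_image: "j < n \<Longrightarrow> depth ` ancestors j = {..depth j}"
proof -
  assume j: "j < n"
  have "depth ` ancestors j \<subseteq> {..depth j}"
    using depth_le[OF _ j] by auto
  moreover have "card (depth ` ancestors j) = card {..depth j}"
    using card_image[OF inj_on_depth[OF j]] card_ancestors[OF j] by simp
  ultimately show ?thesis
    using card_subset_eq[of "{..depth j}"] by simp
qed

lemma ancestor_eq:
  assumes "j < n" "i \<in> ancestors j" "depth i = k"
  shows "ancestor j k = i"
  unfolding ancestor_def
  using assms inj_on_depth[OF assms(1)] by (auto simp: inj_on_def)

lemma ancestor:
  assumes "j < n" "k \<le> depth j"
  shows "ancestor j k \<in> ancestors j" "depth (ancestor j k) = k"
proof -
  obtain i where "i \<in> ancestors j" "depth i = k"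
    using depth_image[OF assms(1)] assms(2) by (metis atMost_iff imageE)
  with ancestor_eq[OF assms(1) this] show "ancestor j k \<in> ancestors j" "depth (ancestor j k) = k"
    by simp_all
qed

lemma ancestor_less: "j < n \<Longrightarrow> k \<le> depth j \<Longrightarrow> ancestor j k < n"
  using ancestor(1) ancestors_less by blast

lemma ancestor_depth_self: "j < n \<Longrightarrow> ancestor j (depth j) = j"
  by (rule ancestor_eq[OF _ self_in_ancestors]) auto

lemma ancestors_of_ancestor:
  assumes j: "j < n" and i: "i \<in> ancestors j"
  shows "ancestors i = {c \<in> ancestors j. depth c \<le> depth i}"
proof
  show "ancestors i \<subseteq> {c \<in> ancestors j. depth c \<le> depth i}"
    using ancestors_mono[OF i j] depth_le[OF _ ancestors_less[OF i]] by auto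
  show "{c \<in> ancestors j. depth c \<le> depth i} \<subseteq> ancestors i"
  proof
    fix c
    assume c: "c \<in> {c \<in> ancestors j. depth c \<le> depth i}"
    then have "c \<in> ancestors i \<or> i \<in> ancestors c"
      using ancestors_in_ancestors[OF _ i j] by auto
    moreover have "i \<in> ancestors c \<Longrightarrow> i = c"
      using c depth_less[of i c] ancestors_less by fastforce
    ultimately show "c \<in> ancestors i"
      using self_in_ancestors ancestors_less[OF i] by auto
  qed
qed

lemma ancestor_ancestor:
  assumes "j < n" "k' \<le> k" "k \<le> depth j"
  shows "ancestor (ancestor j k) k' = ancestor j k'"
proof -
  have "ancestor j k' \<in> ancestors (ancestor j k)"
    using ancestors_of_ancestor[OF assms(1) ancestor(1)[OF assms(1,3)]] ancestor[OF assms(1)] assms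
    by auto
  then show ?thesis
    using ancestor_eq[OF ancestor_less[OF assms(1,3)]] ancestor(2)[OF assms(1)] assms by simp
qed

lemma ancestors_deepest:
  assumes "j < n" "c \<in> ancestors j" "depth j \<le> depth c"
  shows "c = j"
  using inj_on_depth[OF assms(1)] assms self_in_ancestors[OF assms(1)] depth_le[OF assms(2,1)]
  by (auto simp: inj_on_def)

lemma ancestors_root: "j < n \<Longrightarrow> depth j = 0 \<Longrightarrow> ancestors j = {j}"
  using ancestors_deepest self_in_ancestors by fastforce

lemma mem_odd_ancestors: "x \<in> odd_ancestors w \<longleftrightarrow> x < n \<and> odd (card (ancestors x \<inter> w))"
  unfolding odd_ancestors_def by simp

lemma odd_ancestors_vxor: "odd_ancestors (vxor v w) = vxor (odd_ancestors v) (odd_ancestors w)"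
  by (auto simp: vxor_iff mem_odd_ancestors odd_card_Int_vxor[OF finite_ancestors])

lemma odd_ancestors_empty: "odd_ancestors {} = {}"
  by (simp add: odd_ancestors_def)

lemma mem_odd_ancestors_root: "j < n \<Longrightarrow> depth j = 0 \<Longrightarrow> j \<in> odd_ancestors w \<longleftrightarrow> j \<in> w"
  by (simp add: mem_odd_ancestors ancestors_root Int_insert_left)

lemma mem_odd_ancestors_split:
  assumes j: "j < n" and k: "k \<le> depth j"
  shows "j \<in> odd_ancestors w \<longleftrightarrow>
    odd (card ({c \<in> ancestors j. k < depth c} \<inter> w)) \<noteq> (ancestor j k \<in> odd_ancestors w)"
proof -
  have lower: "ancestors (ancestor j k) = {c \<in> ancestors j. depth c \<le> k}"
    using ancestors_of_ancestor[OF j ancestor(1)[OF j k]] ancestor(2)[OF j k] by simp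
  have "ancestors j \<inter> w = ({c \<in> ancestors j. k < depth c} \<inter> w) \<union> (ancestors (ancestor j k) \<inter> w)"
    unfolding lower by auto
  moreover have "card (({c \<in> ancestors j. k < depth c} \<inter> w) \<union> (ancestors (ancestor j k) \<inter> w)) =
      card ({c \<in> ancestors j. k < depth c} \<inter> w) + card (ancestors (ancestor j k) \<inter> w)"
    by (rule card_Un_disjoint) (auto simp: finite_ancestors lower)
  ultimately have "card (ancestors j \<inter> w) =
      card ({c \<in> ancestors j. k < depth c} \<inter> w) + card (ancestors (ancestor j k) \<inter> w)"
    by simp
  then show ?thesis
    using j ancestor_less[OF j k] by (simp add: mem_odd_ancestors)
qed

definition parent :: "nat \<Rightarrow> nat" where
  "parent j = ancestor j (depth j - 1)"

lemma parent:
  assumes "j < n" "0 < depth j"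
  shows "parent j < n" "depth (parent j) = depth j - 1"
    "k \<le> depth j - 1 \<Longrightarrow> ancestor (parent j) k = ancestor j k"
  using assms ancestor_less ancestor(2) ancestor_ancestor unfolding parent_def by auto

lemma mem_odd_ancestors_parent:
  assumes j: "j < n" and pos: "0 < depth j"
  shows "j \<in> odd_ancestors w \<longleftrightarrow> (j \<in> w) \<noteq> (parent j \<in> odd_ancestors w)"
proof -
  have "{c \<in> ancestors j. depth j - 1 < depth c} = {j}"
    using pos self_in_ancestors[OF j] ancestors_deepest[OF j] by auto
  then show ?thesis
    using mem_odd_ancestors_split[OF j, of "depth j - 1" w] by (simp add: parent_def Int_insert_left)
qed

end

lemma (in linear_sw_outmap) forest_closure: "forest_closure n R"
  unfolding forest_closure_def using R_refl R_antisym R_trans R_chain by blast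

lemma card_multiples_atMost:
  assumes "0 < (K::nat)"
  shows "card {d. d \<le> D \<and> K dvd d} = D div K + 1"
proof -
  have "{d. d \<le> D \<and> K dvd d} = (\<lambda>t. K * t) ` {..D div K}"
  proof (intro Set.set_eqI iffI)
    fix d
    assume "d \<in> {d. d \<le> D \<and> K dvd d}"
    then obtain t where t: "d = K * t" "K * t \<le> D" by (auto elim: dvdE)
    then have "t \<le> D div K"
      using less_eq_div_iff_mult_less_eq[OF assms] by (simp add: mult.commute)
    with t show "d \<in> (\<lambda>t. K * t) ` {..D div K}" by blast
  next
    fix d
    assume "d \<in> (\<lambda>t. K * t) ` {..D div K}"
    then obtain t where t: "d = K * t" "t \<le> D div K" by auto
    then have "K * t \<le> D"
      using less_eq_div_iff_mult_less_eq[OF assms] by (simp add: mult.commute)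
    with t show "d \<in> {d. d \<le> D \<and> K dvd d}" by simp
  qed
  moreover have "inj_on (\<lambda>t. K * t) {..D div K}"
    using assms by (auto simp: inj_on_def)
  ultimately show ?thesis
    by (simp add: card_image)
qed

lemma dvd_Suc_mult_div:
  assumes "(K::nat) dvd Suc e" "0 < K"
  shows "K * (e div K) = Suc e - K"
proof -
  have "Suc e div K = Suc (e div K)"
    using assms div_Suc[of e K] by (simp add: dvd_eq_mod_eq_0)
  moreover have "K * (Suc e div K) = Suc e" using assms(1) by simp
  ultimately show ?thesis by simp
qed

lemma odd_multiple_mult_div:
  assumes "(P::nat) dvd d" "\<not> 2 * P dvd d"
  shows "2 * P * (d div (2 * P)) = d - P" "P \<le> d"
proof -
  obtain u where u: "d = P * u" using assms(1) by blast
  then have "odd u" using assms(2) by auto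
  then obtain t where "u = 2 * t + 1" by (metis oddE)
  then have d: "d = 2 * P * t + P" using u by (simp add: algebra_simps)
  then have "0 < P" using assms(2) by (cases P) auto
  with d show "2 * P * (d div (2 * P)) = d - P" "P \<le> d" by simp_all
qed

lemma odd_multiple_in_window:
  assumes "(P::nat) > 0" "2 * P dvd d" "d - 2 * P < e" "e \<le> d" "P dvd e" "\<not> 2 * P dvd e"
  shows "e = d - P"
proof -
  obtain t where t: "d = 2 * P * t" using assms(2) by blast
  obtain u where u: "e = P * u" using assms(5) by blast
  have "odd u" using assms(6) u by auto
  have "P * u \<le> P * (2 * t)" using assms(4) t u by (simp add: algebra_simps)
  then have "u \<le> 2 * t" using assms(1) by simp
  moreover have "P * (2 * t - 2) < P * u"
    using assms(3) t u by (simp add: algebra_simps diff_mult_distrib2)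
  then have "2 * t - 2 < u" by simp
  ultimately have "u = 2 * t - 1" using \<open>odd u\<close> by presburger
  then show ?thesis using t u \<open>odd u\<close> by (simp add: algebra_simps diff_mult_distrib2)
qed

lemma horner_sum_bits_eq:
  assumes "(x::nat) < 2 ^ L" "\<And>b. b < L \<Longrightarrow> f b \<longleftrightarrow> bit x b"
  shows "horner_sum of_bool 2 (map f [0..<L]) = x"
proof -
  have "map f [0..<L] = map (bit x) [0..<L]" using assms(2) by simp
  then have "horner_sum of_bool 2 (map f [0..<L]) = take_bit L x"
    by (simp only: horner_sum_bit_eq_take_bit)
  then show ?thesis
    using assms(1) by (simp add: take_bit_nat_eq_self)
qed

text \<open>Pointers to vertices are encoded as \<open>Suc i\<close> for vertex \<open>i\<close>, with \<open>0\<close> for no vertex,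
  so that they fit into the same \<open>L\<close> bits as the vertex indices.\<close>

definition pointer_in :: "nat \<Rightarrow> nat set \<Rightarrow> bool" where
  "pointer_in p S \<longleftrightarrow> p \<noteq> 0 \<and> p - 1 \<in> S"

definition far_query :: "nat \<Rightarrow> (nat \<Rightarrow> nat) \<Rightarrow> nat \<Rightarrow> (nat \<Rightarrow> nat) \<Rightarrow> nat \<Rightarrow> nat set" where
  "far_query n d m ptr b = {c. c < n \<and> 2 ^ Suc m dvd d c \<and> bit (Suc c) b \<noteq> bit (ptr c) b}"

definition near_query :: "nat \<Rightarrow> (nat \<Rightarrow> nat) \<Rightarrow> nat \<Rightarrow> nat \<Rightarrow> nat set" where
  "near_query n d m b = {c. c < n \<and> 2 ^ m dvd d c \<and> \<not> 2 ^ Suc m dvd d c \<and> bit (Suc c) b}"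

definition jump_update :: "nat \<Rightarrow> (nat \<Rightarrow> nat) \<Rightarrow> nat \<Rightarrow> (nat \<Rightarrow> nat) \<Rightarrow>
    (nat \<Rightarrow> nat set) \<Rightarrow> (nat \<Rightarrow> nat set) \<Rightarrow> nat \<Rightarrow> nat" where
  "jump_update L d m ptr F N a =
     (if 2 ^ Suc m dvd d a then horner_sum of_bool 2 (map (\<lambda>b. (a \<in> N b) \<noteq> pointer_in (ptr a) (N b)) [0..<L])
      else horner_sum of_bool 2 (map (\<lambda>b. a \<in> F b) [0..<L]))"

context forest_closure
begin

lemma card_ancestors_depth_filter:
  assumes "j < n"
  shows "card {c \<in> ancestors j. P (depth c)} = card {d. d \<le> depth j \<and> P d}"
proof -
  have "{d. d \<le> depth j \<and> P d} = {d \<in> depth ` ancestors j. P d}"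
    using depth_image[OF assms] by auto
  also have "\<dots> = depth ` {c \<in> ancestors j. P (depth c)}" by auto
  finally show ?thesis
    using inj_on_subset[OF inj_on_depth[OF assms]] by (simp add: card_image)
qed

lemma mem_odd_ancestors_depth_multiples:
  assumes j: "j < n"
  shows "j \<in> odd_ancestors {a. a < n \<and> 2 ^ m dvd depth a} \<longleftrightarrow> \<not> bit (depth j) m"
proof -
  have "ancestors j \<inter> {a. a < n \<and> 2 ^ m dvd depth a} = {c \<in> ancestors j. 2 ^ m dvd depth c}"
    using ancestors_less by auto
  then have "card (ancestors j \<inter> {a. a < n \<and> 2 ^ m dvd depth a}) = depth j div 2 ^ m + 1"
    using card_ancestors_depth_filter[OF j] card_multiples_atMost[of "2 ^ m"] by simp
  then show ?thesis
    using j by (simp add: mem_odd_ancestors bit_iff_odd)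
qed

definition jump :: "nat \<Rightarrow> nat \<Rightarrow> nat" where
  "jump h a = (if 2 ^ h \<le> depth a then Suc (ancestor a (depth a - 2 ^ h)) else 0)"

text \<open>Along the path from \<open>x\<close> to its root, the vertices of depth divisible by \<open>2 ^ Suc m\<close>
  and their jump pointers form a chain, so the parity of the chosen bit telescopes.\<close>

lemma mem_odd_ancestors_far_query:
  assumes ptr: "\<And>c. c < n \<Longrightarrow> 2 ^ Suc m dvd depth c \<Longrightarrow> ptr c = jump (Suc m) c"
  shows "x < n \<Longrightarrow> x \<in> odd_ancestors (far_query n depth m ptr b) \<longleftrightarrow>
    bit (Suc (ancestor x (2 ^ Suc m * (depth x div 2 ^ Suc m)))) b"
proof (induction "depth x" arbitrary: x rule: less_induct)
  case less
  let ?K = "2 ^ Suc m :: nat" and ?F = "far_query n depth m ptr b"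
  show ?case
  proof (cases "depth x = 0")
    case True
    then show ?thesis
      using less.prems ptr[OF less.prems] mem_odd_ancestors_root[OF less.prems True]
        ancestor_depth_self[OF less.prems]
      by (simp add: far_query_def jump_def)
  next
    case False
    then obtain e where e: "depth x = Suc e" by (cases "depth x") auto
    have pos: "0 < depth x" using False by simp
    have "?K * (e div ?K) \<le> depth x - 1" using e by simp
    then have IH: "parent x \<in> odd_ancestors ?F \<longleftrightarrow> bit (Suc (ancestor x (?K * (e div ?K)))) b"
      using less.hyps[of "parent x"] parent[OF less.prems pos] e by simp
    have step: "x \<in> odd_ancestors ?F \<longleftrightarrow> (x \<in> ?F) \<noteq> (parent x \<in> odd_ancestors ?F)"
      by (rule mem_odd_ancestors_parent[OF less.prems pos])
    show ?thesis
    proof (cases "?K dvd depth x")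
      case True
      have "x \<in> ?F \<longleftrightarrow> bit (Suc x) b \<noteq> bit (Suc (ancestor x (depth x - ?K))) b"
        using ptr[OF less.prems True] less.prems True pos dvd_imp_le[OF True]
        by (simp add: far_query_def jump_def)
      moreover have "?K * (e div ?K) = depth x - ?K"
        using dvd_Suc_mult_div[of ?K e] True e by simp
      moreover have "ancestor x (?K * (depth x div ?K)) = x"
        using True ancestor_depth_self[OF less.prems] by simp
      ultimately show ?thesis
        using step IH by auto
    next
      case False
      then have "x \<notin> ?F" by (simp add: far_query_def)
      moreover have "depth x div ?K = e div ?K"
        using False e div_Suc[of e ?K] by (simp add: dvd_eq_mod_eq_0)
      ultimately show ?thesis
        using step IH by simp
    qed
  qed
qed

lemma not_mem_odd_ancestors_near_query_root:
  "x < n \<Longrightarrow> depth x = 0 \<Longrightarrow> x \<notin> odd_ancestors (near_query n depth m b)"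
  by (simp add: mem_odd_ancestors_root near_query_def)

lemma mem_odd_ancestors_near_query:
  assumes x: "x < n" and K: "2 ^ Suc m dvd depth x" and pos: "0 < depth x"
  shows "x \<in> odd_ancestors (near_query n depth m b) \<longleftrightarrow>
    bit (Suc (ancestor x (depth x - 2 ^ m))) b \<noteq>
    (ancestor x (depth x - 2 ^ Suc m) \<in> odd_ancestors (near_query n depth m b))"
proof -
  define P :: nat where "P = 2 ^ m"
  have KP: "2 ^ Suc m = 2 * P" by (simp add: P_def)
  have Pp: "0 < P" by (simp add: P_def)
  let ?N = "near_query n depth m b"
  define u where "u = ancestor x (depth x - P)"
  have K2: "2 * P dvd depth x" using K unfolding KP .
  have Kle: "2 * P \<le> depth x" using K2 pos by (simp add: dvd_imp_le)
  have u: "u \<in> ancestors x" "depth u = depth x - P" "u < n"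
    using ancestor[OF x, of "depth x - P"] ancestor_less[OF x, of "depth x - P"]
    unfolding u_def by auto
  have "P dvd depth x" by (rule dvd_trans[OF dvd_triv_right K2])
  then have uP: "P dvd depth u" unfolding u(2) by (rule dvd_diff_nat) simp
  have uK: "\<not> 2 * P dvd depth u"
  proof
    assume "2 * P dvd depth u"
    then have "2 * P dvd depth x - depth u" by (rule dvd_diff_nat[OF K2])
    moreover have "depth x - depth u = P" using Kle u(2) by simp
    ultimately have "2 * P dvd P" by simp
    then show False using Pp by (simp add: dvd_imp_le)
  qed
  have uN: "u \<in> ?N \<longleftrightarrow> bit (Suc u) b"
    using u(3) uP uK unfolding near_query_def P_def by simp
  have only_u: "c = u" if "c \<in> ancestors x" "depth x - 2 * P < depth c" "c \<in> ?N" for c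
  proof -
    from that(3) have c1: "2 ^ m dvd depth c" and c2: "\<not> 2 ^ Suc m dvd depth c"
      by (simp_all add: near_query_def)
    have cP: "P dvd depth c" unfolding P_def by (rule c1)
    have cK: "\<not> 2 * P dvd depth c" unfolding KP[symmetric] by (rule c2)
    have "depth c = depth x - P"
      by (rule odd_multiple_in_window[OF Pp K2 that(2) depth_le[OF that(1) x] cP cK])
    then show "c = u"
      by (intro inj_onD[OF inj_on_depth[OF x] _ that(1) u(1)]) (simp add: u(2))
  qed
  have "depth x - 2 * P < depth x - P" using Kle Pp by arith
  then have "u \<in> {c \<in> ancestors x. depth x - 2 * P < depth c}"
    using u(1,2) by simp
  moreover have "{c \<in> ancestors x. depth x - 2 * P < depth c} \<inter> ?N \<subseteq> {u}"
  proof
    fix c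
    assume "c \<in> {c \<in> ancestors x. depth x - 2 * P < depth c} \<inter> ?N"
    then have "c = u" by (intro only_u) simp_all
    then show "c \<in> {u}" by simp
  qed
  ultimately have "{c \<in> ancestors x. depth x - 2 * P < depth c} \<inter> ?N = (if bit (Suc u) b then {u} else {})"
    using uN by (cases "bit (Suc u) b") auto
  then have "x \<in> odd_ancestors ?N \<longleftrightarrow> bit (Suc u) b \<noteq> (ancestor x (depth x - 2 * P) \<in> odd_ancestors ?N)"
    using mem_odd_ancestors_split[OF x, of "depth x - 2 * P" ?N] by (cases "bit (Suc u) b") simp_all
  then show ?thesis by (simp add: u_def P_def)
qed

lemma jump_update_correct:
  assumes ptr: "\<And>c. c < n \<Longrightarrow> 2 ^ Suc m dvd depth c \<Longrightarrow> ptr c = jump (Suc m) c"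
    and L: "n < 2 ^ L" and a: "a < n" and am: "2 ^ m dvd depth a"
  shows "jump_update L depth m ptr (\<lambda>b. odd_ancestors (far_query n depth m ptr b))
      (\<lambda>b. odd_ancestors (near_query n depth m b)) a = jump m a"
proof -
  let ?F = "\<lambda>b. odd_ancestors (far_query n depth m ptr b)"
    and ?N = "\<lambda>b. odd_ancestors (near_query n depth m b)"
  have target: "Suc (ancestor a (depth a - 2 ^ m)) < 2 ^ L"
    using ancestor_less[OF a, of "depth a - 2 ^ m"] L by simp
  show ?thesis
  proof (cases "2 ^ Suc m dvd depth a")
    case False
    then have "2 ^ Suc m * (depth a div 2 ^ Suc m) = depth a - 2 ^ m" "2 ^ m \<le> depth a"
      using odd_multiple_mult_div[of "2 ^ m" "depth a"] am by simp_all
    then show ?thesis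
      using False mem_odd_ancestors_far_query[OF ptr a] horner_sum_bits_eq[OF target]
      by (simp add: jump_update_def jump_def)
  next
    case True
    show ?thesis
    proof (cases "depth a = 0")
      case True
      then have "(\<lambda>b. (a \<in> ?N b) \<noteq> pointer_in (ptr a) (?N b)) = (\<lambda>b. False)"
        using ptr[OF a \<open>2 ^ Suc m dvd depth a\<close>] not_mem_odd_ancestors_near_query_root[OF a]
        by (simp add: pointer_in_def jump_def)
      moreover have "horner_sum of_bool 2 (map (\<lambda>b. False) [0..<L]) = (0::nat)"
        using horner_sum_bits_eq[of 0 L "\<lambda>b. False"] by simp
      ultimately show ?thesis
        using \<open>2 ^ Suc m dvd depth a\<close> True by (simp add: jump_update_def jump_def)
    next
      case False
      let ?y = "ancestor a (depth a - 2 ^ Suc m)"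
      have "2 ^ Suc m \<le> depth a"
        using \<open>2 ^ Suc m dvd depth a\<close> False by (simp add: dvd_imp_le)
      then have "pointer_in (ptr a) S \<longleftrightarrow> ?y \<in> S" for S
        using ptr[OF a \<open>2 ^ Suc m dvd depth a\<close>] by (simp add: pointer_in_def jump_def)
      then have "(a \<in> ?N b) \<noteq> pointer_in (ptr a) (?N b) \<longleftrightarrow> bit (Suc (ancestor a (depth a - 2 ^ m))) b"
        for b
        using mem_odd_ancestors_near_query[OF a \<open>2 ^ Suc m dvd depth a\<close>, of b] False
        by (simp; argo)
      then have "horner_sum of_bool 2 (map (\<lambda>b. (a \<in> ?N b) \<noteq> pointer_in (ptr a) (?N b)) [0..<L])
          = Suc (ancestor a (depth a - 2 ^ m))"
        by (intro horner_sum_bits_eq[OF target])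
      moreover have "(2::nat) ^ m \<le> 2 ^ Suc m" by simp
      then have "2 ^ m \<le> depth a"
        using \<open>2 ^ Suc m \<le> depth a\<close> by (rule order_trans)
      ultimately show ?thesis
        using \<open>2 ^ Suc m dvd depth a\<close> by (simp add: jump_update_def jump_def)
    qed
  qed
qed

end

fun query_list :: "nat set list \<Rightarrow> (nat set list \<Rightarrow> qalg) \<Rightarrow> qalg" where
  "query_list [] k = k []"
| "query_list (v # vs) k = Query v (\<lambda>a. query_list vs (\<lambda>as. k (a # as)))"

lemma run_query_list:
  "run_result (query_list vs k) out = run_result (k (map out vs)) out"
  "run_queries (query_list vs k) out = length vs + run_queries (k (map out vs)) out"
  by (induction vs arbitrary: k) auto

text \<open>Both phases receive the answer \<open>t\<close> to the query \<open>{}\<close> and use an answer \<open>out w\<close> only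
  through \<open>vxor (out w) t\<close>, which is the set of vertices with an odd number of ancestors in \<open>w\<close>.
  The first phase maintains \<open>d j = depth j mod 2 ^ m\<close>; the second one the jump pointers for
  decreasing powers of two.\<close>

fun depth_rounds :: "nat \<Rightarrow> nat set \<Rightarrow> nat \<Rightarrow> nat \<Rightarrow> (nat \<Rightarrow> nat) \<Rightarrow> ((nat \<Rightarrow> nat) \<Rightarrow> qalg) \<Rightarrow> qalg" where
  "depth_rounds n t 0 m d k = k d"
| "depth_rounds n t (Suc r) m d k = Query {a. a < n \<and> d a = 0}
     (\<lambda>ans. depth_rounds n t r (Suc m) (\<lambda>j. d j + (if j \<in> vxor ans t then 0 else 2 ^ m)) k)"

fun jump_rounds :: "nat \<Rightarrow> nat set \<Rightarrow> nat \<Rightarrow> (nat \<Rightarrow> nat) \<Rightarrow> nat \<Rightarrow> (nat \<Rightarrow> nat) \<Rightarrow>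
    ((nat \<Rightarrow> nat) \<Rightarrow> qalg) \<Rightarrow> qalg" where
  "jump_rounds n t L d 0 ptr k = k ptr"
| "jump_rounds n t L d (Suc m) ptr k =
     query_list (map (far_query n d m ptr) [0..<L] @ map (near_query n d m) [0..<L])
       (\<lambda>ans. jump_rounds n t L d m
          (jump_update L d m ptr (\<lambda>b. vxor (ans ! b) t) (\<lambda>b. vxor (ans ! (L + b)) t)) k)"

definition sink_alg :: "nat \<Rightarrow> qalg" where
  "sink_alg n = (let L = floorlog 2 n in
     Query {} (\<lambda>t. depth_rounds n t L 0 (\<lambda>_. 0)
       (\<lambda>d. jump_rounds n t L d L (\<lambda>_. 0)
         (\<lambda>ptr. Answer {j. j < n \<and> (j \<in> t) \<noteq> pointer_in (ptr j) t}))))"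

lemma jump_update_cong:
  assumes "\<And>b. b < L \<Longrightarrow> F b = F' b" "\<And>b. b < L \<Longrightarrow> N b = N' b" "d a = d' a"
  shows "jump_update L d m ptr F N a = jump_update L d' m ptr F' N' a"
proof -
  have "map (\<lambda>b. a \<in> F b) [0..<L] = map (\<lambda>b. a \<in> F' b) [0..<L]"
    "map (\<lambda>b. (a \<in> N b) \<noteq> pointer_in (ptr a) (N b)) [0..<L] =
     map (\<lambda>b. (a \<in> N' b) \<noteq> pointer_in (ptr a) (N' b)) [0..<L]"
    using assms(1,2) by (auto intro!: map_cong)
  then show ?thesis
    unfolding jump_update_def assms(3) by (simp only:)
qed

locale forest_outmap = forest_closure +
  fixes s :: "nat set" and out :: "nat set \<Rightarrow> nat set"
  assumes sink_subset: "s \<subseteq> {..<n}"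
    and outmap: "\<And>v. v \<subseteq> {..<n} \<Longrightarrow> out v = odd_ancestors (vxor v s)"
begin

lemma out_empty: "out {} = odd_ancestors s"
  using outmap[of "{}"] by (simp add: vxor_def)

lemma vxor_out_empty: "w \<subseteq> {..<n} \<Longrightarrow> vxor (out w) (out {}) = odd_ancestors w"
  by (auto simp: outmap out_empty odd_ancestors_vxor vxor_iff)

lemma sink: "is_sink n out s"
  using outmap[OF sink_subset] sink_subset
  by (simp add: is_sink_def vxor_def odd_ancestors_empty)

lemma depth_rounds_run:
  assumes "\<forall>j<n. d j = depth j mod 2 ^ m"
  shows "\<exists>d'. (\<forall>j<n. d' j = depth j mod 2 ^ (m + r)) \<and>
    run_result (depth_rounds n (out {}) r m d k) out = run_result (k d') out \<and>
    run_queries (depth_rounds n (out {}) r m d k) out = r + run_queries (k d') out"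
  using assms
proof (induction r arbitrary: m d)
  case 0
  then show ?case by auto
next
  case (Suc r)
  let ?Q = "{a. a < n \<and> d a = 0}"
  have "?Q = {a. a < n \<and> 2 ^ m dvd depth a}"
    using Suc.prems by (auto simp: dvd_eq_mod_eq_0)
  then have answer: "vxor (out ?Q) (out {}) = odd_ancestors {a. a < n \<and> 2 ^ m dvd depth a}"
    using vxor_out_empty[of ?Q] by auto
  define d2 where "d2 = (\<lambda>j. d j + (if j \<in> vxor (out ?Q) (out {}) then 0 else 2 ^ m))"
  have "\<forall>j<n. d2 j = depth j mod 2 ^ Suc m"
    using Suc.prems mem_odd_ancestors_depth_multiples take_bit_Suc_from_most[of m "depth _"]
    by (auto simp: d2_def answer take_bit_eq_mod)
  from Suc.IH[OF this] obtain d' where "\<forall>j<n. d' j = depth j mod 2 ^ (Suc m + r)"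
    "run_result (depth_rounds n (out {}) r (Suc m) d2 k) out = run_result (k d') out"
    "run_queries (depth_rounds n (out {}) r (Suc m) d2 k) out = r + run_queries (k d') out"
    by blast
  then show ?case
    by (intro exI[of _ d']) (simp add: d2_def)
qed

lemma jump_rounds_run:
  assumes L: "n < 2 ^ L" and d: "\<forall>j<n. d j = depth j"
    and ptr: "\<forall>a<n. 2 ^ r dvd depth a \<longrightarrow> ptr a = jump r a"
  shows "\<exists>ptr'. (\<forall>a<n. ptr' a = jump 0 a) \<and>
     run_result (jump_rounds n (out {}) L d r ptr k) out = run_result (k ptr') out \<and>
     run_queries (jump_rounds n (out {}) L d r ptr k) out = r * (2 * L) + run_queries (k ptr') out"
  using ptr
proof (induction r arbitrary: ptr)
  case 0
  then show ?case by auto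
next
  case (Suc m)
  let ?qs = "map (far_query n d m ptr) [0..<L] @ map (near_query n d m) [0..<L]"
  let ?ans = "map out ?qs"
  have "far_query n d m ptr b = far_query n depth m ptr b" "near_query n d m b = near_query n depth m b"
    for b
    using d by (auto simp: far_query_def near_query_def)
  moreover have "far_query n depth m ptr b \<subseteq> {..<n}" "near_query n depth m b \<subseteq> {..<n}" for b
    by (auto simp: far_query_def near_query_def)
  ultimately have far: "vxor (?ans ! b) (out {}) = odd_ancestors (far_query n depth m ptr b)"
    and near: "vxor (?ans ! (L + b)) (out {}) = odd_ancestors (near_query n depth m b)" if "b < L" for b
    using that vxor_out_empty by (simp_all add: nth_append)
  define ptr2 where "ptr2 = jump_update L d m ptr (\<lambda>b. vxor (?ans ! b) (out {}))
    (\<lambda>b. vxor (?ans ! (L + b)) (out {}))"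
  have "ptr2 a = jump m a" if "a < n" "2 ^ m dvd depth a" for a
  proof -
    have "ptr2 a = jump_update L depth m ptr (\<lambda>b. odd_ancestors (far_query n depth m ptr b))
        (\<lambda>b. odd_ancestors (near_query n depth m b)) a"
      unfolding ptr2_def using d that(1) far near by (intro jump_update_cong) auto
    also have "\<dots> = jump m a"
      using Suc.prems jump_update_correct[OF _ L that] by blast
    finally show ?thesis .
  qed
  with Suc.IH obtain ptr' where "\<forall>a<n. ptr' a = jump 0 a"
    "run_result (jump_rounds n (out {}) L d m ptr2 k) out = run_result (k ptr') out"
    "run_queries (jump_rounds n (out {}) L d m ptr2 k) out = m * (2 * L) + run_queries (k ptr') out"
    by blast
  then show ?case
    by (intro exI[of _ ptr']) (simp add: run_query_list ptr2_def)
qed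

lemma sink_from_parents:
  assumes "\<forall>j<n. ptr j = jump 0 j"
  shows "{j. j < n \<and> (j \<in> odd_ancestors s) \<noteq> pointer_in (ptr j) (odd_ancestors s)} = s"
proof -
  have "(j \<in> odd_ancestors s) \<noteq> pointer_in (ptr j) (odd_ancestors s) \<longleftrightarrow> j \<in> s" if "j < n" for j
  proof (cases "depth j = 0")
    case True
    then show ?thesis
      using assms that mem_odd_ancestors_root by (simp add: jump_def pointer_in_def)
  next
    case False
    then have "ptr j = Suc (parent j)"
      using assms that by (simp add: jump_def parent_def Suc_le_eq)
    then show ?thesis
      using mem_odd_ancestors_parent[OF that] False by (auto simp: pointer_in_def)
  qed
  then show ?thesis
    using sink_subset by auto
qed

lemma sink_alg_run:
  "run_result (sink_alg n) out = s \<and>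
   run_queries (sink_alg n) out = 1 + floorlog 2 n + floorlog 2 n * (2 * floorlog 2 n)"
proof -
  define L where "L = floorlog 2 n"
  let ?t = "out {}"
  let ?answer = "\<lambda>ptr. Answer {j. j < n \<and> (j \<in> ?t) \<noteq> pointer_in (ptr j) ?t}"
  have L: "n < 2 ^ L"
    unfolding L_def by (cases "n = 0") (simp_all add: floorlog_bounds)
  obtain d where d: "\<forall>j<n. d j = depth j mod 2 ^ L"
    "run_result (depth_rounds n ?t L 0 (\<lambda>_. 0) (\<lambda>d. jump_rounds n ?t L d L (\<lambda>_. 0) ?answer)) out
      = run_result (jump_rounds n ?t L d L (\<lambda>_. 0) ?answer) out"
    "run_queries (depth_rounds n ?t L 0 (\<lambda>_. 0) (\<lambda>d. jump_rounds n ?t L d L (\<lambda>_. 0) ?answer)) out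
      = L + run_queries (jump_rounds n ?t L d L (\<lambda>_. 0) ?answer) out"
    using depth_rounds_run[of "\<lambda>_. 0" 0 L "\<lambda>d. jump_rounds n ?t L d L (\<lambda>_. 0) ?answer"] by auto
  have depth_small: "depth j < 2 ^ L" if "j < n" for j
    using depth_less_n[OF that] L by simp
  then have "\<forall>j<n. d j = depth j"
    using d(1) by simp
  moreover have "0 = jump L a" if "a < n" for a
    using depth_small[OF that] by (simp add: jump_def)
  ultimately obtain ptr where ptr: "\<forall>a<n. ptr a = jump 0 a"
    "run_result (jump_rounds n ?t L d L (\<lambda>_. 0) ?answer) out = run_result (?answer ptr) out"
    "run_queries (jump_rounds n ?t L d L (\<lambda>_. 0) ?answer) out = L * (2 * L) + run_queries (?answer ptr) out"
    using jump_rounds_run[OF L, of d L "\<lambda>_. 0" ?answer] by auto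
  show ?thesis
    using d(2,3) ptr(2,3) sink_from_parents[OF ptr(1)]
    by (simp add: sink_alg_def L_def[symmetric] out_empty)
qed

end

lemma matousek_uso_outmap:
  assumes "matousek_uso n out"
  obtains R s where "s \<subseteq> {..<n}"
    "\<And>v. v \<subseteq> {..<n} \<Longrightarrow> out v = {r. r < n \<and> odd (card ({i. i < n \<and> R i r} \<inter> vxor v s))}"
proof -
  obtain \<sigma> A s where "\<sigma> permutes {..<n} \<and> upper_triangular_gf2 n A \<and> gf2_invertible n A \<and>
      s \<subseteq> {..<n} \<and>
      (\<forall>v. v \<subseteq> {..<n} \<longrightarrow> out v = gf2_matvec n (\<lambda>j i. A (\<sigma> j) (\<sigma> i)) (vxor v s))"
    using assms unfolding matousek_uso_def by (elim exE) (rule that)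
  then have s: "s \<subseteq> {..<n}"
    and out: "\<And>v. v \<subseteq> {..<n} \<Longrightarrow> out v = gf2_matvec n (\<lambda>j i. A (\<sigma> j) (\<sigma> i)) (vxor v s)"
    by simp_all
  define R where "R = (\<lambda>i r. A (\<sigma> r) (\<sigma> i))"
  have "out v = {r. r < n \<and> odd (card ({i. i < n \<and> R i r} \<inter> vxor v s))}" if "v \<subseteq> {..<n}" for v
  proof -
    have "{i. i < n \<and> A (\<sigma> r) (\<sigma> i) \<and> i \<in> vxor v s} = {i. i < n \<and> R i r} \<inter> vxor v s" for r
      by (auto simp: R_def)
    then show ?thesis
      using out[OF that] by (simp add: gf2_matvec_def)
  qed
  with s show thesis by (rule that)
qed

text \<open>Realizability alone forces the influence relation to be the closure of a branching.\<close>

lemma realizable_linear_sw_outmap: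
  assumes "realizable n out" and s: "s \<subseteq> {..<n}"
    and lin: "\<And>v. v \<subseteq> {..<n} \<Longrightarrow> out v = {r. r < n \<and> odd (card ({i. i < n \<and> R i r} \<inter> vxor v s))}"
  obtains M q where "linear_sw_outmap n M q R"
proof -
  obtain M q where P: "P_matrix n M" and q: "q \<in> carrier_vec n" and nd: "nondegenerate_lcp n M q"
    and sw: "\<And>v. v \<subseteq> {..<n} \<Longrightarrow> out v = sw_outmap n M q v"
    using assms(1) unfolding realizable_def by blast
  have fin: "finite {i. i < n \<and> R i r}" for r by simp
  have empty: "q $ r < 0 \<longleftrightarrow> odd (card ({i. i < n \<and> R i r} \<inter> s))" if "r < n" for r
  proof -
    have "q $ r < 0 \<longleftrightarrow> r \<in> out {}"
      using sw[of "{}"] sw_sol_empty[OF q] that by (simp add: sw_outmap_def)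
    also have "\<dots> \<longleftrightarrow> odd (card ({i. i < n \<and> R i r} \<inter> s))"
      using lin[of "{}"] that by (simp add: vxor_def)
    finally show ?thesis .
  qed
  have "sw_sol n M q v $ r < 0 \<longleftrightarrow> odd (card ({i. i < n \<and> R i r} \<inter> v)) \<noteq> (q $ r < 0)"
    if "v \<subseteq> {..<n}" "r < n" for v r
  proof -
    have "sw_sol n M q v $ r < 0 \<longleftrightarrow> r \<in> out v"
      using sw[OF that(1)] that(2) by (simp add: sw_outmap_def)
    also have "\<dots> \<longleftrightarrow> odd (card ({i. i < n \<and> R i r} \<inter> vxor v s))"
      using lin[OF that(1)] that(2) by simp
    also have "\<dots> \<longleftrightarrow> odd (card ({i. i < n \<and> R i r} \<inter> v)) \<noteq> odd (card ({i. i < n \<and> R i r} \<inter> s))"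
      by (rule odd_card_Int_vxor[OF fin])
    finally show ?thesis
      using empty[OF that(2)] by simp
  qed
  with P q nd have "linear_sw_outmap n M q R"
    by (simp add: linear_sw_outmap_def)
  then show thesis by (rule that)
qed

lemma matousek_realizable_forest_outmap:
  assumes "matousek_uso n out" "realizable n out"
  obtains R s where "forest_outmap n R s out"
proof -
  obtain R s where s: "s \<subseteq> {..<n}"
    and lin: "\<And>v. v \<subseteq> {..<n} \<Longrightarrow> out v = {r. r < n \<and> odd (card ({i. i < n \<and> R i r} \<inter> vxor v s))}"
    by (rule matousek_uso_outmap[OF assms(1)]) (rule that)
  obtain M q where "linear_sw_outmap n M q R"
    by (rule realizable_linear_sw_outmap[OF assms(2) s lin])
  then have forest: "forest_closure n R"
    by (rule linear_sw_outmap.forest_closure)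
  have "forest_outmap n R s out"
  proof (intro forest_outmap.intro forest_outmap_axioms.intro forest s)
    show "out v = forest_closure.odd_ancestors n R (vxor v s)" if "v \<subseteq> {..<n}" for v
      using lin[OF that]
      by (simp add: forest_closure.odd_ancestors_def[OF forest] forest_closure.ancestors_def[OF forest])
  qed
  then show thesis by (rule that)
qed

lemma sink_alg_query_bound:
  assumes n: "2 \<le> n"
  shows "real (1 + floorlog 2 n + floorlog 2 n * (2 * floorlog 2 n)) \<le> 16 / (ln 2)\<^sup>2 * (ln (real n))\<^sup>2"
proof -
  define L where "L = floorlog 2 n"
  have "L \<noteq> 0"
    using n by (simp add: L_def floorlog_eq_zero_iff)
  then have L_pos: "0 < L" by simp
  have "2 ^ (L - 1) \<le> n"
    using floorlog_bounds[of n 2] n unfolding L_def by simp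
  then have "real (2 ^ (L - 1)) \<le> real n"
    by (rule of_nat_mono)
  then have "ln ((2::real) ^ (L - 1)) \<le> ln (real n)"
    using n by (subst ln_le_cancel_iff) auto
  then have "real (L - 1) * ln 2 \<le> ln (real n)"
    by (simp add: ln_realpow)
  then have "real L - 1 \<le> ln (real n) / ln 2"
    using L_pos by (simp add: le_divide_eq of_nat_diff)
  moreover have "1 \<le> ln (real n) / ln 2"
    using n by simp
  ultimately have L_le: "real L \<le> 2 * (ln (real n) / ln 2)"
    by linarith
  have "1 * 1 \<le> L * L" "L * 1 \<le> L * L"
    using L_pos by (intro mult_le_mono; simp)+
  then have "1 + L + L * (2 * L) \<le> 4 * (L * L)"
    by linarith
  then have "real (1 + L + L * (2 * L)) \<le> real (4 * (L * L))"
    by (rule of_nat_mono)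
  then have "real (1 + L + L * (2 * L)) \<le> 4 * (real L)\<^sup>2"
    by (simp add: power2_eq_square)
  also have "\<dots> \<le> 4 * (2 * (ln (real n) / ln 2))\<^sup>2"
    using L_le by (simp add: power_mono)
  also have "\<dots> = 16 / (ln 2)\<^sup>2 * (ln (real n))\<^sup>2"
    by (simp add: power_divide power_mult_distrib)
  finally show ?thesis unfolding L_def .
qed

theorem theorem2:
  shows "\<exists>alg :: nat \<Rightarrow> qalg.
     (\<forall>n out. matousek_uso n out \<and> realizable n out \<longrightarrow> is_sink n out (run_result (alg n) out)) \<and>
     (\<exists>c N. \<forall>n\<ge>N. \<forall>out. matousek_uso n out \<and> realizable n out \<longrightarrow>
        real (run_queries (alg n) out) \<le> c * (ln (real n))\<^sup>2)"
proof (intro exI[of _ sink_alg] conjI allI impI)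
  fix n out
  assume "matousek_uso n out \<and> realizable n out"
  then obtain R s where "forest_outmap n R s out"
    using matousek_realizable_forest_outmap by blast
  then show "is_sink n out (run_result (sink_alg n) out)"
    by (simp add: forest_outmap.sink_alg_run forest_outmap.sink)
next
  show "\<exists>c N. \<forall>n\<ge>N. \<forall>out. matousek_uso n out \<and> realizable n out \<longrightarrow>
      real (run_queries (sink_alg n) out) \<le> c * (ln (real n))\<^sup>2"
  proof (intro exI[of _ "16 / (ln 2)\<^sup>2"] exI[of _ 2] allI impI)
    fix n out
    assume "2 \<le> n" and "matousek_uso n out \<and> realizable n out"
    then obtain R s where "forest_outmap n R s out"
      using matousek_realizable_forest_outmap by blast
    then show "real (run_queries (sink_alg n) out) \<le> 16 / (ln 2)\<^sup>2 * (ln (real n))\<^sup>2"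
      using sink_alg_query_bound[OF \<open>2 \<le> n\<close>] by (simp add: forest_outmap.sink_alg_run)
  qed
qed

end
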